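(* Let $p\in(0,1)$ and let $(\lambda_n)_{n\ge1}$ be a sequence with $\lambda_1=1$ and $0<\lambda_n\le\lambda_{n-1}$ for all $n>1$. Let $r_1,r_2,\dots$ be $\{0,1\}$-valued random variables with $\Pr(r_1=1)=p$ and, for every $n\ge2$, $\Pr(r_n=1\mid r_1,\dots,r_{n-1})=\lambda_n p+(1-\lambda_n)\bar p_{n-1}$, where $\bar p_m=\frac1m\sum_{i=1}^m r_i$. Define $\hat r_1=r_1$, $\hat r_i=\frac{r_i-(1-\lambda_i)\bar p_{i-1}}{\lambda_i}$ for $i\ge2$, and for weights $\omega_1,\dots,\omega_n>0$ let $\hat p_n=\frac{\sum_{i=1}^n\omega_i\hat r_i}{\sum_{i=1}^n\omega_i}$. Then \[\mathrm{Var}[\hat p_n]=\frac{1}{\big(\sum_{i=1}^n\omega_i\big)^2}\sum_{i=1}^n\frac{\omega_i^2}{\lambda_i^2}\Big(p(1-p)-(1-\lambda_i)^2\,\mathrm{Var}[\bar p_{i-1}]\Big),\] where the $i=1$ term is read as $\omega_1^2\,p(1-p)$ (since $1-\lambda_1=0$). *)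

theory Defs
  imports "HOL-Probability.Probability"
begin

definition pbar :: "(nat \<Rightarrow> 'a \<Rightarrow> real) \<Rightarrow> nat \<Rightarrow> 'a \<Rightarrow> real" where
  "pbar r m x = (\<Sum>i=1..m. r i x) / real m"

definition rhat :: "(nat \<Rightarrow> real) \<Rightarrow> (nat \<Rightarrow> 'a \<Rightarrow> real) \<Rightarrow> nat \<Rightarrow> 'a \<Rightarrow> real" where
  "rhat lam r i x = (if i = 1 then r 1 x
                     else (r i x - (1 - lam i) * pbar r (i - 1) x) / lam i)"

definition phat :: "(nat \<Rightarrow> real) \<Rightarrow> (nat \<Rightarrow> real) \<Rightarrow> (nat \<Rightarrow> 'a \<Rightarrow> real) \<Rightarrow> nat \<Rightarrow> 'a \<Rightarrow> real" where
  "phat w lam r n x = (\<Sum>i=1..n. w i * rhat lam r i x) / (\<Sum>i=1..n. w i)"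

text \<open>Since r_1..r_{n-1} are discrete, the conditional probability is stated atom-wise:
  for every 0/1 history b, P(history = b and r_n = 1) = (lambda_n p + (1-lambda_n) mean(b)) * P(history = b).\<close>
definition reinforced_process ::
  "'a measure \<Rightarrow> real \<Rightarrow> (nat \<Rightarrow> real) \<Rightarrow> (nat \<Rightarrow> 'a \<Rightarrow> real) \<Rightarrow> bool" where
  "reinforced_process M p lam r \<longleftrightarrow>
     (\<forall>i\<ge>1. r i \<in> borel_measurable M \<and> (\<forall>x\<in>space M. r i x \<in> {0, 1})) \<and>
     measure M {x\<in>space M. r 1 x = 1} = p \<and>
     (\<forall>n\<ge>2. \<forall>b::nat \<Rightarrow> real. (\<forall>i\<in>{1..<n}. b i \<in> {0, 1}) \<longrightarrow>
        measure M {x\<in>space M. (\<forall>i\<in>{1..<n}. r i x = b i) \<and> r n x = 1}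
        = (lam n * p + (1 - lam n) * ((\<Sum>i=1..<n. b i) / real (n - 1)))
          * measure M {x\<in>space M. \<forall>i\<in>{1..<n}. r i x = b i})"

end

theory Submission imports Defs begin

(* The centred debiased observations d_i = rhat_i - p equal (r_i - q_i) / lambda_i, where
   q_i = lambda_i p + (1 - lambda_i) pbar_(i-1) is the conditional probability of r_i = 1 given
   r_1, ..., r_(i-1). Summing the defining identity of the process over the finitely many 0/1
   histories gives E[r_i g] = E[q_i g] for every function g of r_1, ..., r_(i-1); hence
   E[d_i g] = 0, so the d_i are centred and pairwise orthogonal and Var[phat_n] is the weighted
   sum of the E[d_i^2]. Since r_i^2 = r_i and E[r_i q_i] = E[q_i^2], we get
   E[d_i^2] = (p - E[q_i^2]) / lambda_i^2, and E[q_i^2] = p^2 + (1 - lambda_i)^2 Var[pbar_(i-1)]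
   because E[r_i] = p for all i. *)

lemma (in prob_space) variance_affine_transform:
  fixes X :: "'a \<Rightarrow> real"
  assumes "integrable M X"
  shows "variance (\<lambda>x. a + b * X x) = b\<^sup>2 * variance X"
proof -
  have "expectation (\<lambda>x. a + b * X x) = a + b * expectation X"
    using assms by (simp add: prob_space)
  then have "variance (\<lambda>x. a + b * X x) = expectation (\<lambda>x. b\<^sup>2 * (X x - expectation X)\<^sup>2)"
    by (simp add: power2_eq_square algebra_simps)
  then show ?thesis
    by simp
qed

lemma (in prob_space) variance_sum_orthogonal:
  fixes d :: "'i \<Rightarrow> 'a \<Rightarrow> real"
  assumes "finite I"
    and integrable: "\<And>i. i \<in> I \<Longrightarrow> integrable M (d i)"
    and integrable_mult: "\<And>i j. i \<in> I \<Longrightarrow> j \<in> I \<Longrightarrow> integrable M (\<lambda>x. d i x * d j x)"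
    and centered: "\<And>i. i \<in> I \<Longrightarrow> expectation (d i) = 0"
    and orthogonal: "\<And>i j. i \<in> I \<Longrightarrow> j \<in> I \<Longrightarrow> i \<noteq> j \<Longrightarrow> expectation (\<lambda>x. d i x * d j x) = 0"
  shows "variance (\<lambda>x. c + (\<Sum>i\<in>I. a i * d i x)) = (\<Sum>i\<in>I. (a i)\<^sup>2 * expectation (\<lambda>x. (d i x)\<^sup>2))"
proof -
  have "expectation (\<lambda>x. c + (\<Sum>i\<in>I. a i * d i x)) = c"
    using integrable centered by (simp add: Bochner_Integration.integral_sum prob_space)
  then have "variance (\<lambda>x. c + (\<Sum>i\<in>I. a i * d i x))
      = expectation (\<lambda>x. \<Sum>i\<in>I. \<Sum>j\<in>I. a i * a j * (d i x * d j x))"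
    by (simp add: power2_eq_square sum_product ac_simps)
  also have "\<dots> = (\<Sum>i\<in>I. \<Sum>j\<in>I. a i * a j * expectation (\<lambda>x. d i x * d j x))"
    using integrable_mult
    by (simp add: Bochner_Integration.integral_sum Bochner_Integration.integrable_sum)
  also have "\<dots> = (\<Sum>i\<in>I. (a i)\<^sup>2 * expectation (\<lambda>x. (d i x)\<^sup>2))"
  proof (rule sum.cong[OF refl])
    fix i assume "i \<in> I"
    then have "(\<Sum>j\<in>I. a i * a j * expectation (\<lambda>x. d i x * d j x))
        = (\<Sum>j\<in>I. if j = i then a i * a i * expectation (\<lambda>x. d i x * d i x) else 0)"
      using orthogonal by (intro sum.cong) auto
    then show "(\<Sum>j\<in>I. a i * a j * expectation (\<lambda>x. d i x * d j x))
        = (a i)\<^sup>2 * expectation (\<lambda>x. (d i x)\<^sup>2)"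
      using \<open>finite I\<close> \<open>i \<in> I\<close> by (simp add: power2_eq_square)
  qed
  finally show ?thesis .
qed

lemma (in prob_space) integral_sum_indicator:
  assumes "finite I" and "\<And>i. i \<in> I \<Longrightarrow> A i \<in> events"
  shows "integrable M (\<lambda>x. \<Sum>i\<in>I. c i * indicator (A i) x :: real)"
    and "expectation (\<lambda>x. \<Sum>i\<in>I. c i * indicator (A i) x) = (\<Sum>i\<in>I. c i * prob (A i))"
proof -
  have indicator_integrable: "integrable M (indicator (A i) :: _ \<Rightarrow> real)" if "i \<in> I" for i
    using assms(2)[OF that] by (intro integrable_real_indicator) (auto simp: less_top[symmetric])
  then show "integrable M (\<lambda>x. \<Sum>i\<in>I. c i * indicator (A i) x :: real)"
    by (intro Bochner_Integration.integrable_sum integrable_mult_right)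
  show "expectation (\<lambda>x. \<Sum>i\<in>I. c i * indicator (A i) x) = (\<Sum>i\<in>I. c i * prob (A i))"
    using assms indicator_integrable
    by (subst Bochner_Integration.integral_sum) (auto simp: Int_absorb2 sets.sets_into_space)
qed

locale binary_process = prob_space M for M :: "'a measure" +
  fixes r :: "nat \<Rightarrow> 'a \<Rightarrow> real"
  assumes r_measurable: "1 \<le> i \<Longrightarrow> r i \<in> borel_measurable M"
    and r_binary: "1 \<le> i \<Longrightarrow> x \<in> space M \<Longrightarrow> r i x \<in> {0, 1}"
begin

definition history :: "nat \<Rightarrow> 'a \<Rightarrow> nat \<Rightarrow> real" where
  "history m x = restrict (\<lambda>i. r i x) {1..<m}"

definition histories :: "nat \<Rightarrow> (nat \<Rightarrow> real) set" where
  "histories m = PiE {1..<m} (\<lambda>_. {0, 1})"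

definition history_event :: "nat \<Rightarrow> (nat \<Rightarrow> real) \<Rightarrow> 'a set" where
  "history_event m b = {x \<in> space M. \<forall>i\<in>{1..<m}. r i x = b i}"

definition determined_by_history :: "nat \<Rightarrow> ('a \<Rightarrow> real) \<Rightarrow> bool" where
  "determined_by_history m g \<longleftrightarrow> (\<exists>f. \<forall>x\<in>space M. g x = f (history m x))"

lemma finite_histories: "finite (histories m)"
  unfolding histories_def by (intro finite_PiE) auto

lemma history_in_histories: "x \<in> space M \<Longrightarrow> history m x \<in> histories m"
  using r_binary unfolding history_def histories_def by auto

lemma history_event_sets: "history_event m b \<in> events"
proof -
  have "{x \<in> space M. r i x = b i} \<in> events" if "i \<in> {1..<m}" for i
  proof -
    have [measurable]: "r i \<in> borel_measurable M"
      using that by (intro r_measurable) simp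
    show ?thesis by measurable
  qed
  then show ?thesis
    unfolding history_event_def by (intro sets.sets_Collect_finite_All) auto
qed

lemma mem_history_event_iff:
  "b \<in> histories m \<Longrightarrow> x \<in> history_event m b \<longleftrightarrow> x \<in> space M \<and> history m x = b"
  unfolding histories_def history_event_def history_def
  by (auto simp: PiE_iff extensional_def restrict_def fun_eq_iff)

lemma sum_histories_indicator:
  fixes c :: "(nat \<Rightarrow> real) \<Rightarrow> real"
  assumes "x \<in> space M"
  shows "(\<Sum>b\<in>histories m. c b * indicator (history_event m b) x) = c (history m x)"
proof -
  have "(\<Sum>b\<in>histories m. c b * indicator (history_event m b) x)
      = (\<Sum>b\<in>histories m. if history m x = b then c b else 0)"
    using assms by (intro sum.cong) (auto simp: mem_history_event_iff)
  then show ?thesis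
    using assms finite_histories history_in_histories by simp
qed

lemma sum_histories_indicator_r_eq_1:
  fixes c :: "(nat \<Rightarrow> real) \<Rightarrow> real"
  assumes "1 \<le> m" and "x \<in> space M"
  shows "(\<Sum>b\<in>histories m. c b * indicator {y \<in> history_event m b. r m y = 1} x)
       = r m x * c (history m x)"
proof -
  have "indicator {y \<in> history_event m b. r m y = 1} x = r m x * indicator (history_event m b) x"
    for b :: "nat \<Rightarrow> real"
    using r_binary[OF assms] by (auto simp: indicator_def)
  then have "(\<Sum>b\<in>histories m. c b * indicator {y \<in> history_event m b. r m y = 1} x)
      = r m x * (\<Sum>b\<in>histories m. c b * indicator (history_event m b) x)"
    by (simp add: sum_distrib_left mult.left_commute)
  then show ?thesis
    using sum_histories_indicator[OF assms(2)] by simp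
qed

lemma integral_history_fun:
  fixes c :: "(nat \<Rightarrow> real) \<Rightarrow> real"
  shows "integrable M (\<lambda>x. c (history m x))"
    and "expectation (\<lambda>x. c (history m x)) = (\<Sum>b\<in>histories m. c b * prob (history_event m b))"
proof -
  have sum_eq: "\<And>x. x \<in> space M \<Longrightarrow>
      c (history m x) = (\<Sum>b\<in>histories m. c b * indicator (history_event m b) x)"
    by (simp add: sum_histories_indicator)
  show "integrable M (\<lambda>x. c (history m x))"
    by (subst Bochner_Integration.integrable_cong[OF refl sum_eq])
      (auto intro: integral_sum_indicator finite_histories history_event_sets)
  show "expectation (\<lambda>x. c (history m x)) = (\<Sum>b\<in>histories m. c b * prob (history_event m b))"
    by (subst Bochner_Integration.integral_cong[OF refl sum_eq])
      (auto intro: integral_sum_indicator finite_histories history_event_sets)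
qed

lemma integral_r_mult_history_fun:
  fixes c :: "(nat \<Rightarrow> real) \<Rightarrow> real"
  assumes "1 \<le> m"
  shows "integrable M (\<lambda>x. r m x * c (history m x))"
    and "expectation (\<lambda>x. r m x * c (history m x))
       = (\<Sum>b\<in>histories m. c b * prob {x \<in> history_event m b. r m x = 1})"
proof -
  have [measurable]: "r m \<in> borel_measurable M"
    using assms by (rule r_measurable)
  have events: "{x \<in> history_event m b. r m x = 1} \<in> events" for b
    using history_event_sets[of m b] by measurable
  have sum_eq: "\<And>x. x \<in> space M \<Longrightarrow> r m x * c (history m x)
      = (\<Sum>b\<in>histories m. c b * indicator {y \<in> history_event m b. r m y = 1} x)"
    using assms by (simp add: sum_histories_indicator_r_eq_1)
  show "integrable M (\<lambda>x. r m x * c (history m x))"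
    by (subst Bochner_Integration.integrable_cong[OF refl sum_eq])
      (auto intro: integral_sum_indicator finite_histories events)
  show "expectation (\<lambda>x. r m x * c (history m x))
      = (\<Sum>b\<in>histories m. c b * prob {x \<in> history_event m b. r m x = 1})"
    by (subst Bochner_Integration.integral_cong[OF refl sum_eq])
      (auto intro: integral_sum_indicator finite_histories events)
qed

lemma determined_by_history_integrable:
  "determined_by_history m g \<Longrightarrow> integrable M g"
  unfolding determined_by_history_def
  using integral_history_fun(1) Bochner_Integration.integrable_cong[OF refl] by metis

lemma determined_by_history_mono:
  assumes "determined_by_history m g" and "m \<le> m'"
  shows "determined_by_history m' g"
proof -
  obtain c where c: "\<And>x. x \<in> space M \<Longrightarrow> g x = c (history m x)"
    using assms(1) unfolding determined_by_history_def by blast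
  have "history m x = restrict (history m' x) {1..<m}" for x
    using assms(2) by (auto simp: history_def restrict_def fun_eq_iff)
  then show ?thesis
    unfolding determined_by_history_def using c
    by (auto intro!: exI[of _ "\<lambda>b. c (restrict b {1..<m})"])
qed

lemma determined_by_history_const: "determined_by_history m (\<lambda>x. a)"
  unfolding determined_by_history_def by (rule exI[of _ "\<lambda>_. a"]) simp

lemma determined_by_history_r: "1 \<le> i \<Longrightarrow> i < m \<Longrightarrow> determined_by_history m (r i)"
  unfolding determined_by_history_def history_def
  by (rule exI[of _ "\<lambda>b. b i"]) simp

lemma determined_by_history_pbar: "k < m \<Longrightarrow> determined_by_history m (pbar r k)"
  unfolding determined_by_history_def history_def pbar_def
  by (rule exI[of _ "\<lambda>b. (\<Sum>i=1..k. b i) / real k"]) simp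

lemma determined_by_history_compose:
  assumes "determined_by_history m g"
  shows "determined_by_history m (\<lambda>x. F (g x))"
proof -
  obtain c where "\<forall>x\<in>space M. g x = c (history m x)"
    using assms unfolding determined_by_history_def by blast
  then show ?thesis
    unfolding determined_by_history_def by (auto intro!: exI[of _ "\<lambda>b. F (c b)"])
qed

lemma determined_by_history_compose2:
  assumes "determined_by_history m g" and "determined_by_history m h"
  shows "determined_by_history m (\<lambda>x. F (g x) (h x))"
proof -
  obtain c d where "\<forall>x\<in>space M. g x = c (history m x)" and "\<forall>x\<in>space M. h x = d (history m x)"
    using assms unfolding determined_by_history_def by blast
  then show ?thesis
    unfolding determined_by_history_def by (auto intro!: exI[of _ "\<lambda>b. F (c b) (d b)"])
qed

end

locale reinforced_process_space = prob_space M for M :: "'a measure" +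
  fixes p :: real and lam :: "nat \<Rightarrow> real" and r :: "nat \<Rightarrow> 'a \<Rightarrow> real"
  assumes reinforced: "reinforced_process M p lam r"
    and lam_1: "lam 1 = 1"
    and lam_pos: "1 \<le> k \<Longrightarrow> 0 < lam k"
begin

sublocale binary_process M r
  using reinforced unfolding reinforced_process_def by unfold_locales auto

definition cond_prob :: "nat \<Rightarrow> 'a \<Rightarrow> real" where
  "cond_prob m x = lam m * p + (1 - lam m) * pbar r (m - 1) x"

definition history_cond_prob :: "nat \<Rightarrow> (nat \<Rightarrow> real) \<Rightarrow> real" where
  "history_cond_prob m b = lam m * p + (1 - lam m) * ((\<Sum>i=1..<m. b i) / real (m - 1))"

lemma cond_prob_eq_history_cond_prob:
  "x \<in> space M \<Longrightarrow> cond_prob m x = history_cond_prob m (history m x)"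
proof -
  have "{1..m - 1} = {1..<m}"
    by auto
  then show "cond_prob m x = history_cond_prob m (history m x)"
    unfolding cond_prob_def history_cond_prob_def pbar_def history_def by simp
qed

lemma prob_history_event_r_eq_1:
  assumes "1 \<le> m" and "b \<in> histories m"
  shows "prob {x \<in> history_event m b. r m x = 1} = history_cond_prob m b * prob (history_event m b)"
proof (cases "m = 1")
  case True
  have "prob {x \<in> space M. r 1 x = 1} = p"
    using reinforced unfolding reinforced_process_def by blast
  moreover have "history_event 1 b = space M"
    by (simp add: history_event_def)
  ultimately show ?thesis
    using True lam_1 by (simp add: history_cond_prob_def prob_space)
next
  case False
  then have "2 \<le> m"
    using assms(1) by simp
  moreover have "\<forall>i\<in>{1..<m}. b i \<in> {0, 1}"
    using assms(2) by (auto simp: histories_def PiE_iff)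
  moreover have "{x \<in> history_event m b. r m x = 1}
      = {x\<in>space M. (\<forall>i\<in>{1..<m}. r i x = b i) \<and> r m x = 1}"
    unfolding history_event_def by blast
  ultimately show ?thesis
    using reinforced[unfolded reinforced_process_def, THEN conjunct2, THEN conjunct2, rule_format]
    unfolding history_event_def history_cond_prob_def by simp
qed

lemma determined_by_history_cond_prob:
  "1 \<le> m \<Longrightarrow> determined_by_history m (cond_prob m)"
  unfolding cond_prob_def[abs_def]
  by (rule determined_by_history_compose[of _ "pbar r (m - 1)" "\<lambda>s. lam m * p + (1 - lam m) * s"],
      rule determined_by_history_pbar) simp

lemma expectation_r_mult:
  assumes "1 \<le> m" and "determined_by_history m g"
  shows "expectation (\<lambda>x. r m x * g x) = expectation (\<lambda>x. cond_prob m x * g x)"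
proof -
  obtain c where c: "\<And>x. x \<in> space M \<Longrightarrow> g x = c (history m x)"
    using assms(2) unfolding determined_by_history_def by blast
  have "expectation (\<lambda>x. r m x * g x) = expectation (\<lambda>x. r m x * c (history m x))"
    using c by (intro Bochner_Integration.integral_cong) auto
  also have "\<dots> = (\<Sum>b\<in>histories m. c b * prob {x \<in> history_event m b. r m x = 1})"
    using assms(1) by (rule integral_r_mult_history_fun)
  also have "\<dots> = (\<Sum>b\<in>histories m. (history_cond_prob m b * c b) * prob (history_event m b))"
    using assms(1) by (intro sum.cong) (simp_all add: prob_history_event_r_eq_1)
  also have "\<dots> = expectation (\<lambda>x. history_cond_prob m (history m x) * c (history m x))"
    by (rule integral_history_fun(2)[symmetric])
  also have "\<dots> = expectation (\<lambda>x. cond_prob m x * g x)"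
    using c by (intro Bochner_Integration.integral_cong) (auto simp: cond_prob_eq_history_cond_prob)
  finally show ?thesis .
qed

lemma integrable_r: "1 \<le> i \<Longrightarrow> integrable M (r i)"
  by (intro determined_by_history_integrable[of "Suc i"] determined_by_history_r) auto

lemma integrable_pbar: "integrable M (pbar r k)"
  by (intro determined_by_history_integrable[of "Suc k"] determined_by_history_pbar) auto

lemma expectation_cond_prob:
  "expectation (cond_prob m) = lam m * p + (1 - lam m) * expectation (pbar r (m - 1))"
  unfolding cond_prob_def using integrable_pbar by (simp add: prob_space)

lemma expectation_r: "1 \<le> i \<Longrightarrow> expectation (r i) = p"
proof (induction i rule: less_induct)
  case (less i)
  have "expectation (r i) = expectation (cond_prob i)"
    using expectation_r_mult[OF less.prems determined_by_history_const[of i 1]] by simp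
  also have "\<dots> = p"
  proof (cases "i = 1")
    case True
    then show ?thesis
      using lam_1 by (simp add: expectation_cond_prob)
  next
    case False
    have "expectation (pbar r (i - 1)) = expectation (\<lambda>x. \<Sum>j=1..i - 1. r j x) / real (i - 1)"
      by (simp add: pbar_def[abs_def])
    also have "expectation (\<lambda>x. \<Sum>j=1..i - 1. r j x) = (\<Sum>j=1..i - 1. expectation (r j))"
      using integrable_r by (intro Bochner_Integration.integral_sum) auto
    also have "\<dots> = (\<Sum>j=1..i - 1. p)"
      using less.IH by (intro sum.cong) auto
    finally have "expectation (pbar r (i - 1)) = p"
      using False less.prems by simp
    then show ?thesis
      by (simp add: expectation_cond_prob algebra_simps)
  qed
  finally show ?case .
qed

lemma expectation_cond_prob_eq_p: "1 \<le> m \<Longrightarrow> expectation (cond_prob m) = p"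
  using expectation_r_mult[of m "\<lambda>x. 1"] determined_by_history_const expectation_r by simp

lemma variance_cond_prob: "variance (cond_prob m) = (1 - lam m)\<^sup>2 * variance (pbar r (m - 1))"
  unfolding cond_prob_def[abs_def] using integrable_pbar by (rule variance_affine_transform)

lemma rhat_minus_p: "1 \<le> i \<Longrightarrow> rhat lam r i x - p = (r i x - cond_prob i x) / lam i"
  using lam_1 lam_pos[of i] by (cases "i = 1") (auto simp: rhat_def cond_prob_def field_simps)

lemma determined_by_history_rhat_minus_p:
  assumes "1 \<le> i" and "i < m"
  shows "determined_by_history m (\<lambda>x. rhat lam r i x - p)"
proof -
  have "determined_by_history m (\<lambda>x. (r i x - cond_prob i x) / lam i)"
    using assms
    by (intro determined_by_history_compose2[of m "r i" "cond_prob i" "\<lambda>a c. (a - c) / lam i"]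
        determined_by_history_r determined_by_history_mono[OF determined_by_history_cond_prob]) auto
  then show ?thesis
    using assms(1) by (simp add: rhat_minus_p)
qed

lemma integrable_rhat_minus_p: "1 \<le> i \<Longrightarrow> integrable M (\<lambda>x. rhat lam r i x - p)"
  by (intro determined_by_history_integrable[of "Suc i"] determined_by_history_rhat_minus_p) auto

lemma integrable_rhat_minus_p_mult:
  assumes "1 \<le> i" and "1 \<le> j"
  shows "integrable M (\<lambda>x. (rhat lam r i x - p) * (rhat lam r j x - p))"
  using assms
  by (intro determined_by_history_integrable[of "Suc (max i j)"]
      determined_by_history_compose2[where F = "(*)"] determined_by_history_rhat_minus_p) auto

lemma expectation_rhat_minus_p_mult:
  assumes "1 \<le> i" and g: "determined_by_history i g"
  shows "expectation (\<lambda>x. (rhat lam r i x - p) * g x) = 0"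
proof -
  have "integrable M (\<lambda>x. r i x * g x)"
    using assms
    by (intro determined_by_history_integrable[of "Suc i"] determined_by_history_compose2[where F = "(*)"]
        determined_by_history_r determined_by_history_mono[OF g]) auto
  moreover have "integrable M (\<lambda>x. cond_prob i x * g x)"
    using assms
    by (intro determined_by_history_integrable[of i] determined_by_history_compose2[where F = "(*)"]
        determined_by_history_cond_prob)
  ultimately have "expectation (\<lambda>x. (rhat lam r i x - p) * g x)
      = (expectation (\<lambda>x. r i x * g x) - expectation (\<lambda>x. cond_prob i x * g x)) / lam i"
    using assms(1) by (simp add: rhat_minus_p diff_divide_distrib left_diff_distrib)
  then show ?thesis
    using expectation_r_mult[OF assms] by simp
qed

lemma expectation_rhat_minus_p: "1 \<le> i \<Longrightarrow> expectation (\<lambda>x. rhat lam r i x - p) = 0"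
  using expectation_rhat_minus_p_mult[of i "\<lambda>x. 1"] determined_by_history_const by simp

lemma expectation_rhat_minus_p_orthogonal:
  assumes "1 \<le> i" and "1 \<le> j" and "i \<noteq> j"
  shows "expectation (\<lambda>x. (rhat lam r i x - p) * (rhat lam r j x - p)) = 0"
proof (cases "i < j")
  case True
  then show ?thesis
    using assms
    by (subst mult.commute) (intro expectation_rhat_minus_p_mult determined_by_history_rhat_minus_p)
next
  case False
  then show ?thesis
    using assms by (intro expectation_rhat_minus_p_mult determined_by_history_rhat_minus_p) auto
qed

lemma expectation_rhat_minus_p_sq:
  assumes "1 \<le> i"
  shows "expectation (\<lambda>x. (rhat lam r i x - p)\<^sup>2)
       = (p * (1 - p) - (1 - lam i)\<^sup>2 * variance (pbar r (i - 1))) / (lam i)\<^sup>2"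
proof -
  have q: "determined_by_history i (cond_prob i)"
    using assms by (rule determined_by_history_cond_prob)
  have int_q: "integrable M (cond_prob i)" and int_qq: "integrable M (\<lambda>x. (cond_prob i x)\<^sup>2)"
    using q by (auto intro: determined_by_history_integrable determined_by_history_compose)
  have int_rq: "integrable M (\<lambda>x. r i x * cond_prob i x)"
    using assms
    by (intro determined_by_history_integrable[of "Suc i"] determined_by_history_compose2[where F = "(*)"]
        determined_by_history_r determined_by_history_mono[OF q]) auto
  have "expectation (\<lambda>x. (rhat lam r i x - p)\<^sup>2)
      = expectation (\<lambda>x. (r i x - 2 * (r i x * cond_prob i x) + (cond_prob i x)\<^sup>2) / (lam i)\<^sup>2)"
  proof (rule Bochner_Integration.integral_cong[OF refl])
    fix x assume "x \<in> space M"
    then have "(r i x)\<^sup>2 = r i x"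
      using r_binary[OF assms, of x] by (auto simp: power2_eq_square)
    then show "(rhat lam r i x - p)\<^sup>2 = (r i x - 2 * (r i x * cond_prob i x) + (cond_prob i x)\<^sup>2) / (lam i)\<^sup>2"
      using assms by (simp add: rhat_minus_p power_divide power2_diff)
  qed
  also have "\<dots> = (p - 2 * expectation (\<lambda>x. r i x * cond_prob i x)
      + expectation (\<lambda>x. (cond_prob i x)\<^sup>2)) / (lam i)\<^sup>2"
    using assms integrable_r int_rq int_qq by (simp add: expectation_r)
  also have "expectation (\<lambda>x. r i x * cond_prob i x) = expectation (\<lambda>x. (cond_prob i x)\<^sup>2)"
    using expectation_r_mult[OF assms q] by (simp add: power2_eq_square)
  also have "expectation (\<lambda>x. (cond_prob i x)\<^sup>2) = p\<^sup>2 + (1 - lam i)\<^sup>2 * variance (pbar r (i - 1))"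
    using variance_eq[OF int_q int_qq] variance_cond_prob[of i] expectation_cond_prob_eq_p[OF assms] by simp
  finally show ?thesis
    by (simp add: power2_eq_square algebra_simps)
qed

lemma variance_weighted_rhat:
  "variance (\<lambda>x. p + (\<Sum>i=1..n. a i * (rhat lam r i x - p)))
     = (\<Sum>i=1..n. (a i)\<^sup>2 * expectation (\<lambda>x. (rhat lam r i x - p)\<^sup>2))"
proof (rule variance_sum_orthogonal)
  fix i j assume "i \<in> {1..n}" and "j \<in> {1..n}"
  then show "integrable M (\<lambda>x. (rhat lam r i x - p) * (rhat lam r j x - p))"
    and "i \<noteq> j \<Longrightarrow> expectation (\<lambda>x. (rhat lam r i x - p) * (rhat lam r j x - p)) = 0"
    by (simp_all add: integrable_rhat_minus_p_mult expectation_rhat_minus_p_orthogonal)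
qed (simp_all add: integrable_rhat_minus_p expectation_rhat_minus_p)

end

lemma phat_eq_centered_sum:
  assumes "(\<Sum>i=1..n. w i) \<noteq> 0"
  shows "phat w lam r n x = c + (\<Sum>i=1..n. (w i / (\<Sum>j=1..n. w j)) * (rhat lam r i x - c))"
proof -
  define W where "W = (\<Sum>i=1..n. w i)"
  have "(\<Sum>i=1..n. (w i / W) * (rhat lam r i x - c))
      = (\<Sum>i=1..n. w i * rhat lam r i x) / W - W * c / W"
    unfolding W_def by (simp add: sum_divide_distrib sum_distrib_right sum_subtractf diff_divide_distrib
        right_diff_distrib)
  then show ?thesis
    using assms unfolding phat_def W_def[symmetric] by simp
qed

theorem theoremA13:
  fixes M :: "'a measure" and p :: real and lam w :: "nat \<Rightarrow> real"
    and r :: "nat \<Rightarrow> 'a \<Rightarrow> real" and n :: nat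
  assumes "prob_space M"
    and "0 < p" and "p < 1"
    and "lam 1 = 1"
    and "\<forall>k>1. 0 < lam k \<and> lam k \<le> lam (k - 1)"
    and "reinforced_process M p lam r"
    and "n \<ge> 1"
    and "\<forall>i\<in>{1..n}. w i > 0"
  shows "prob_space.variance M (phat w lam r n)
       = (1 / (\<Sum>i=1..n. w i)^2) *
         (\<Sum>i=1..n. (w i)^2 / (lam i)^2 *
            (p * (1 - p) - (1 - lam i)^2 * prob_space.variance M (pbar r (i - 1))))"
proof -
  interpret reinforced_process_space M p lam r
  proof (intro reinforced_process_space.intro reinforced_process_space_axioms.intro)
    show "0 < lam k" if "1 \<le> k" for k
      using assms(4,5) that by (cases "k = 1") auto
  qed (fact assms)+
  define W where "W = (\<Sum>i=1..n. w i)"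
  have "0 < W"
    unfolding W_def using assms(7,8) by (intro sum_pos) auto
  have phat_eq: "phat w lam r n = (\<lambda>x. p + (\<Sum>i=1..n. (w i / W) * (rhat lam r i x - p)))"
    using \<open>0 < W\<close> unfolding W_def by (intro ext phat_eq_centered_sum) simp
  have "variance (phat w lam r n) = (\<Sum>i=1..n. (w i / W)\<^sup>2 * expectation (\<lambda>x. (rhat lam r i x - p)\<^sup>2))"
    unfolding phat_eq by (rule variance_weighted_rhat)
  also have "\<dots> = (1 / W\<^sup>2) * (\<Sum>i=1..n. (w i)\<^sup>2 / (lam i)\<^sup>2 *
      (p * (1 - p) - (1 - lam i)\<^sup>2 * variance (pbar r (i - 1))))"
    by (simp add: sum_distrib_left expectation_rhat_minus_p_sq power_divide)
  finally show ?thesis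
    unfolding W_def .
qed

end
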